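(* $z_2(4,3)=8$.
   Context: Double Zarankiewicz number: consider configurations $G=([m],[n],E_1\cup E_2)$ where $[m]=\{1,\dots,m\}$, $E_1\subseteq[m]\times[n]$ is a set of 1-edges (cells) and $E_2$ is a set of 2-edges $(i,j;k,l)$ with $i,k\in[m]$, $j,l\in[n]$, $i\ne k$, $j\ne l$; the cells $(i,j)$ and $(k,l)$ are the two halves of this 2-edge. Simplicity condition: the halves of all 2-edges are pairwise distinct cells and none of them belongs to $E_1$. A cell is occupied if it lies in $E_1$ or is a half of some 2-edge. $G$ contains a generalized $C_4$-cycle if (1) there are four 1-edges $(i,j),(i,l),(k,j),(k,l)\in E_1$ with $i\ne k$, $j\ne l$; or (2) there is a 2-edge $(i,j;k,l)\in E_2$ whose two opposite cells $(i,l)$ and $(k,j)$ are both occupied; or (3) there are a 2-edge $(i,j;p,q)\in E_2$ and a cell $(k,l)$ such that the five cells $(k,l),(k,j),(k,q),(i,l),(p,l)$ are pairwise distinct and all occupied. $z_2(m,n)$ is the maximum of $|E_1|+|E_2|$ over all such $G$ satisfying the simplicity condition and containing no generalized $C_4$-cycle. *)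

theory Defs
  imports Main
begin

type_synonym cell = "nat \<times> nat"
type_synonym twoedge = "cell \<times> cell"

definition grid :: "nat \<Rightarrow> nat \<Rightarrow> cell set" where
  "grid m n = {1..m} \<times> {1..n}"

text \<open>A 2-edge (i,j;k,l) is represented as the pair ((i,j),(k,l)).\<close>
definition is_twoedge :: "nat \<Rightarrow> nat \<Rightarrow> twoedge \<Rightarrow> bool" where
  "is_twoedge m n e = (fst e \<in> grid m n \<and> snd e \<in> grid m n \<and>
      fst (fst e) \<noteq> fst (snd e) \<and> snd (fst e) \<noteq> snd (snd e))"

definition halves :: "twoedge \<Rightarrow> cell set" where
  "halves e = {fst e, snd e}"

definition is_config :: "nat \<Rightarrow> nat \<Rightarrow> cell set \<Rightarrow> twoedge set \<Rightarrow> bool" where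
  "is_config m n E1 E2 = (E1 \<subseteq> grid m n \<and> (\<forall>e\<in>E2. is_twoedge m n e))"

definition simple_config :: "cell set \<Rightarrow> twoedge set \<Rightarrow> bool" where
  "simple_config E1 E2 =
     ((\<forall>e\<in>E2. \<forall>e'\<in>E2. e \<noteq> e' \<longrightarrow> halves e \<inter> halves e' = {}) \<and>
      (\<forall>e\<in>E2. halves e \<inter> E1 = {}))"

definition occupied :: "cell set \<Rightarrow> twoedge set \<Rightarrow> cell \<Rightarrow> bool" where
  "occupied E1 E2 c = (c \<in> E1 \<or> (\<exists>e\<in>E2. c \<in> halves e))"

definition has_gen_C4 :: "cell set \<Rightarrow> twoedge set \<Rightarrow> bool" where
  "has_gen_C4 E1 E2 =
    ((\<exists>i j k l. i \<noteq> k \<and> j \<noteq> l \<and> (i,j) \<in> E1 \<and> (i,l) \<in> E1 \<and> (k,j) \<in> E1 \<and> (k,l) \<in> E1) \<or>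
     (\<exists>i j k l. ((i,j),(k,l)) \<in> E2 \<and> occupied E1 E2 (i,l) \<and> occupied E1 E2 (k,j)) \<or>
     (\<exists>i j p q k l. ((i,j),(p,q)) \<in> E2 \<and>
        distinct [(k,l),(k,j),(k,q),(i,l),(p,l)] \<and>
        (\<forall>c\<in>{(k,l),(k,j),(k,q),(i,l),(p,l)}. occupied E1 E2 c)))"

definition z2 :: "nat \<Rightarrow> nat \<Rightarrow> nat" where
  "z2 m n = Max {card E1 + card E2 | E1 E2.
      is_config m n E1 E2 \<and> simple_config E1 E2 \<and> \<not> has_gen_C4 E1 E2}"

end

theory Submission
  imports Defs
begin

text \<open>
  A simple configuration in the 4 \<times> 3 grid occupies |E1| + 2|E2| of the 12 cells, and E1 alone,
  being C4-free, has at most 4 + (3 choose 2) = 7 cells: a row with d cells spans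
  (d choose 2) \<ge> d - 1 pairs of columns, and two distinct rows share no such pair.
  Each 2-edge has an unoccupied opposite cell. With two or more 2-edges there are even two
  unoccupied cells: if (a,b) were the only one, every 2-edge would have halves (a,c) and (r,b), and
  the four cells (r,c) spanned by two of them would all be 1-edges, forming a C4.
  Hence |E1| + |E2| \<le> 8, and the bound is attained by an explicit configuration.
\<close>

definition C4_free :: "cell set \<Rightarrow> bool" where
  "C4_free E \<longleftrightarrow>
     \<not> (\<exists>i j k l. i \<noteq> k \<and> j \<noteq> l \<and> (i,j) \<in> E \<and> (i,l) \<in> E \<and> (k,j) \<in> E \<and> (k,l) \<in> E)"

definition occupied_cells :: "cell set \<Rightarrow> twoedge set \<Rightarrow> cell set" where
  "occupied_cells E1 E2 = E1 \<union> (\<Union>e\<in>E2. halves e)"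

lemma finite_grid: "finite (grid m n)"
  by (simp add: grid_def)

lemma card_grid: "card (grid m n) = m * n"
  by (simp add: grid_def card_cartesian_product)

lemma occupied_iff_mem_occupied_cells: "occupied E1 E2 c \<longleftrightarrow> c \<in> occupied_cells E1 E2"
  by (auto simp: occupied_def occupied_cells_def)

lemma C4_free_if_no_gen_C4: "\<not> has_gen_C4 E1 E2 \<Longrightarrow> C4_free E1"
  by (auto simp: has_gen_C4_def C4_free_def)

lemma opposite_cell_unoccupied:
  assumes "\<not> has_gen_C4 E1 E2" "((i,j),(k,l)) \<in> E2"
  shows "(i,l) \<notin> occupied_cells E1 E2 \<or> (k,j) \<notin> occupied_cells E1 E2"
  using assms by (auto simp: has_gen_C4_def occupied_iff_mem_occupied_cells)

lemma not_has_gen_C4I: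
  assumes "C4_free E1"
    and "\<And>i j k l. ((i,j),(k,l)) \<in> E2 \<Longrightarrow>
      (i,l) \<notin> occupied_cells E1 E2 \<or> (k,j) \<notin> occupied_cells E1 E2"
    and "\<And>i j p q k l. ((i,j),(p,q)) \<in> E2 \<Longrightarrow> distinct [(k,l),(k,j),(k,q),(i,l),(p,l)] \<Longrightarrow>
      \<exists>c\<in>{(k,l),(k,j),(k,q),(i,l),(p,l)}. c \<notin> occupied_cells E1 E2"
  shows "\<not> has_gen_C4 E1 E2"
  using assms unfolding has_gen_C4_def C4_free_def occupied_iff_mem_occupied_cells
  by meson

lemma le_Suc_choose_two: "d \<le> Suc (d choose 2)"
  by (cases d) (simp_all add: numeral_2_eq_2)

lemma card_C4_free_le:
  assumes E: "E \<subseteq> grid m n" and free: "C4_free E"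
  shows "card E \<le> m + (n choose 2)"
proof -
  define row where "row i = {j. (i,j) \<in> E}" for i
  define pairs where "pairs i = {P. P \<subseteq> row i \<and> card P = 2}" for i
  have row_sub: "row i \<subseteq> {1..n}" for i
    using E by (auto simp: row_def grid_def)
  have fin_row: "finite (row i)" for i
    using row_sub finite_subset by blast
  have "E = (SIGMA i:{1..m}. row i)"
    using E by (auto simp: row_def grid_def)
  then have "card E = (\<Sum>i\<in>{1..m}. card (row i))"
    using card_SigmaI fin_row by (metis finite_atLeastAtMost)
  also have "\<dots> \<le> (\<Sum>i\<in>{1..m}. Suc (card (pairs i)))"
    by (intro sum_mono) (simp add: pairs_def n_subsets fin_row le_Suc_choose_two)
  also have "\<dots> = m + (\<Sum>i\<in>{1..m}. card (pairs i))"
    by (simp add: sum_Suc)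
  also have "(\<Sum>i\<in>{1..m}. card (pairs i)) = card (\<Union>i\<in>{1..m}. pairs i)"
  proof -
    have "pairs i \<inter> pairs k = {}" if "i \<noteq> k" for i k
    proof (rule ccontr)
      assume "pairs i \<inter> pairs k \<noteq> {}"
      then obtain j l where "j \<noteq> l" "{j, l} \<subseteq> row i" "{j, l} \<subseteq> row k"
        unfolding pairs_def by (auto simp: card_2_iff)
      with \<open>i \<noteq> k\<close> free show False
        by (auto simp: C4_free_def row_def)
    qed
    moreover have "finite (pairs i)" for i
      unfolding pairs_def using fin_row by simp
    ultimately show ?thesis
      by (intro card_UN_disjoint[symmetric]) auto
  qed
  also have "\<dots> \<le> card {P. P \<subseteq> {1..n} \<and> card P = 2}"
    by (rule card_mono) (use row_sub in \<open>auto simp: pairs_def\<close>)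
  also have "\<dots> = n choose 2"
    by (simp add: n_subsets)
  finally show ?thesis by simp
qed

lemma occupied_cells_subset_grid:
  "is_config m n E1 E2 \<Longrightarrow> occupied_cells E1 E2 \<subseteq> grid m n"
  by (auto simp: is_config_def is_twoedge_def occupied_cells_def halves_def)

lemma finite_twoedges:
  assumes "is_config m n E1 E2"
  shows "finite E2"
proof -
  have "E2 \<subseteq> grid m n \<times> grid m n"
    using assms by (force simp: is_config_def is_twoedge_def)
  then show ?thesis
    using finite_grid finite_subset by blast
qed

lemma card_occupied_cells:
  assumes cfg: "is_config m n E1 E2" and simple: "simple_config E1 E2"
  shows "card (occupied_cells E1 E2) = card E1 + 2 * card E2"
proof -
  have edge: "is_twoedge m n e" if "e \<in> E2" for e
    using cfg that by (simp add: is_config_def)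
  have fin_occ: "finite (occupied_cells E1 E2)"
    using occupied_cells_subset_grid[OF cfg] finite_grid finite_subset by blast
  have card_halves: "card (halves e) = 2" if "e \<in> E2" for e
    using edge[OF that] by (cases e) (auto simp: is_twoedge_def halves_def)
  have "card (\<Union>e\<in>E2. halves e) = (\<Sum>e\<in>E2. card (halves e))"
    using simple finite_twoedges[OF cfg]
    by (intro card_UN_disjoint) (auto simp: simple_config_def halves_def)
  also have "\<dots> = 2 * card E2"
    by (simp add: card_halves)
  finally show ?thesis
    using simple fin_occ unfolding occupied_cells_def
    by (subst card_Un_disjoint) (auto simp: simple_config_def)
qed

lemma occupied_cells_psubset_grid:
  assumes cfg: "is_config m n E1 E2" and no_C4: "\<not> has_gen_C4 E1 E2" and "E2 \<noteq> {}"
  shows "occupied_cells E1 E2 \<subset> grid m n"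
proof -
  obtain i j k l where e: "((i,j),(k,l)) \<in> E2"
    using \<open>E2 \<noteq> {}\<close> by (metis ex_in_conv surj_pair)
  then have "(i,l) \<in> grid m n" "(k,j) \<in> grid m n"
    using cfg by (auto simp: is_config_def is_twoedge_def grid_def)
  then show ?thesis
    using opposite_cell_unoccupied[OF no_C4 e] occupied_cells_subset_grid[OF cfg] by blast
qed

lemma card_twoedges_le_one_if_one_hole:
  assumes cfg: "is_config m n E1 E2" and simple: "simple_config E1 E2"
    and no_C4: "\<not> has_gen_C4 E1 E2" and hole: "grid m n - occupied_cells E1 E2 = {(a,b)}"
  shows "card E2 \<le> 1"
proof -
  txt \<open>Every 2-edge has the hole as an opposite cell, so its halves lie in row a and column b.
    Hence a cell outside that row and column, being occupied, is a 1-edge.\<close>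
  have shape: "\<exists>c r. c \<noteq> b \<and> r \<noteq> a \<and> (a,c) \<in> grid m n \<and> (r,b) \<in> grid m n \<and>
      halves e = {(a,c), (r,b)}" if e: "e \<in> E2" for e
  proof -
    obtain i j k l where e_eq: "e = ((i,j),(k,l))"
      by (cases e) auto
    have edge: "i \<noteq> k" "j \<noteq> l" "(i,j) \<in> grid m n" "(k,l) \<in> grid m n"
      "(i,l) \<in> grid m n" "(k,j) \<in> grid m n"
      using cfg e unfolding e_eq by (auto simp: is_config_def is_twoedge_def grid_def)
    have "(i,l) = (a,b) \<or> (k,j) = (a,b)"
      using opposite_cell_unoccupied[OF no_C4 e[unfolded e_eq]] hole edge(5,6) by blast
    then show ?thesis
    proof
      assume "(i,l) = (a,b)"
      with edge show ?thesis
        unfolding e_eq halves_def by (intro exI[of _ j] exI[of _ k]) auto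
    next
      assume "(k,j) = (a,b)"
      with edge show ?thesis
        unfolding e_eq halves_def by (intro exI[of _ l] exI[of _ i]) auto
    qed
  qed
  have "A = B" if "A \<in> E2" "B \<in> E2" for A B
  proof (rule ccontr)
    assume "A \<noteq> B"
    obtain c1 r1 where A: "c1 \<noteq> b" "r1 \<noteq> a" "(a,c1) \<in> grid m n" "(r1,b) \<in> grid m n"
      "halves A = {(a,c1), (r1,b)}"
      using shape[OF \<open>A \<in> E2\<close>] by blast
    obtain c2 r2 where B: "c2 \<noteq> b" "r2 \<noteq> a" "(a,c2) \<in> grid m n" "(r2,b) \<in> grid m n"
      "halves B = {(a,c2), (r2,b)}"
      using shape[OF \<open>B \<in> E2\<close>] by blast
    have "halves A \<inter> halves B = {}"
      using simple that \<open>A \<noteq> B\<close> by (simp add: simple_config_def)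
    then have "c1 \<noteq> c2" "r1 \<noteq> r2"
      using A B by auto
    have "(r,c) \<in> E1" if "r \<in> {r1,r2}" "c \<in> {c1,c2}" for r c
    proof -
      have "(r,c) \<in> grid m n" "(r,c) \<noteq> (a,b)"
        using that A B by (auto simp: grid_def)
      then have "(r,c) \<in> occupied_cells E1 E2"
        using hole by blast
      moreover have "(r,c) \<notin> halves e" if "e \<in> E2" for e
        using shape[OF that] \<open>r \<in> {r1,r2}\<close> \<open>c \<in> {c1,c2}\<close> A B by auto
      ultimately show ?thesis
        by (auto simp: occupied_cells_def)
    qed
    then have "\<not> C4_free E1"
      using \<open>c1 \<noteq> c2\<close> \<open>r1 \<noteq> r2\<close> unfolding C4_free_def by blast
    with C4_free_if_no_gen_C4[OF no_C4] show False
      by contradiction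
  qed
  then show ?thesis
    using card_le_Suc0_iff_eq[OF finite_twoedges[OF cfg]] by simp
qed

lemma card_holes_ge_two:
  assumes cfg: "is_config m n E1 E2" and simple: "simple_config E1 E2"
    and no_C4: "\<not> has_gen_C4 E1 E2" and two: "2 \<le> card E2"
  shows "2 \<le> card (grid m n - occupied_cells E1 E2)"
proof -
  have "E2 \<noteq> {}"
    using two by auto
  then have "grid m n - occupied_cells E1 E2 \<noteq> {}"
    using occupied_cells_psubset_grid[OF cfg no_C4] by blast
  moreover have "card (grid m n - occupied_cells E1 E2) \<noteq> 1"
  proof
    assume "card (grid m n - occupied_cells E1 E2) = 1"
    then obtain a b where "grid m n - occupied_cells E1 E2 = {(a,b)}"
      by (metis card_1_singletonE surj_pair)
    with card_twoedges_le_one_if_one_hole[OF cfg simple no_C4] two show False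
      by simp
  qed
  ultimately show ?thesis
    using finite_grid by (metis One_nat_def card_0_eq finite_Diff less_2_cases not_less)
qed

lemma card_config_le_if_two_twoedges:
  assumes cfg: "is_config m n E1 E2" and simple: "simple_config E1 E2"
    and no_C4: "\<not> has_gen_C4 E1 E2" and "2 \<le> card E2"
  shows "card E1 + 2 * card E2 + 2 \<le> m * n"
proof -
  have "card (grid m n - occupied_cells E1 E2) = m * n - (card E1 + 2 * card E2)"
    using occupied_cells_subset_grid[OF cfg] finite_grid
    by (simp add: card_Diff_subset finite_subset card_grid card_occupied_cells[OF cfg simple])
  moreover have "card E1 + 2 * card E2 \<le> m * n"
    using card_mono[OF finite_grid occupied_cells_subset_grid[OF cfg]]
    by (simp add: card_grid card_occupied_cells[OF cfg simple])
  ultimately show ?thesis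
    using card_holes_ge_two[OF assms] by linarith
qed

lemma card_config_4_3_le:
  assumes cfg: "is_config 4 3 E1 E2" and simple: "simple_config E1 E2"
    and no_C4: "\<not> has_gen_C4 E1 E2"
  shows "card E1 + card E2 \<le> 8"
proof -
  have "card E1 \<le> 4 + (3 choose 2)"
    using cfg card_C4_free_le C4_free_if_no_gen_C4[OF no_C4] by (simp add: is_config_def)
  then have "card E1 \<le> 7"
    by (simp add: choose_two)
  moreover have "card E1 + 2 * card E2 \<le> 10" if "2 \<le> card E2"
    using card_config_le_if_two_twoedges[OF cfg simple no_C4 that] by simp
  ultimately show ?thesis
    by linarith
qed

lemma z2_eqI:
  assumes "is_config m n E1 E2" "simple_config E1 E2" "\<not> has_gen_C4 E1 E2"
    and "card E1 + card E2 = k"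
    and "\<And>E1 E2. is_config m n E1 E2 \<Longrightarrow> simple_config E1 E2 \<Longrightarrow> \<not> has_gen_C4 E1 E2 \<Longrightarrow>
      card E1 + card E2 \<le> k"
  shows "z2 m n = k"
proof -
  let ?S = "{card E1 + card E2 |E1 E2.
    is_config m n E1 E2 \<and> simple_config E1 E2 \<and> \<not> has_gen_C4 E1 E2}"
  have le: "x \<le> k" if "x \<in> ?S" for x
    using that assms(5) by blast
  have "k \<in> ?S"
    using assms(1-4) by blast
  moreover have "finite ?S"
    using le by (meson atMost_iff finite_atMost finite_subset subsetI)
  ultimately show ?thesis
    unfolding z2_def using le by (intro Max_eqI) auto
qed

lemma witness_4_3:
  defines "E1 \<equiv> {(1,2),(1,3),(2,1),(2,3),(3,1),(3,2),(4,1)} :: cell set"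
    and "E2 \<equiv> {((3,3),(4,2))} :: twoedge set"
  shows "is_config 4 3 E1 E2" "simple_config E1 E2" "\<not> has_gen_C4 E1 E2"
    and "card E1 + card E2 = 8"
proof -
  show "is_config 4 3 E1 E2"
    by (simp add: is_config_def is_twoedge_def grid_def E1_def E2_def)
  show "simple_config E1 E2"
    by (simp add: simple_config_def halves_def E1_def E2_def)
  show "card E1 + card E2 = 8"
    by (simp add: E1_def E2_def)
  have occ: "c \<in> occupied_cells E1 E2 \<longleftrightarrow>
      c \<in> {(1,2),(1,3),(2,1),(2,3),(3,1),(3,2),(4,1),(3,3),(4,2)}" for c
    by (auto simp: occupied_cells_def halves_def E1_def E2_def)
  txt \<open>A row of E1 with two cells misses exactly the column equal to its index.\<close>
  have row_pair: "i + j + l = 6" if "(i,j) \<in> E1" "(i,l) \<in> E1" "j \<noteq> l" for i j l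
    using that by (auto simp: E1_def)
  show "\<not> has_gen_C4 E1 E2"
  proof (rule not_has_gen_C4I)
    show "C4_free E1"
      unfolding C4_free_def using row_pair by (metis add_right_cancel)
  next
    fix i j k l
    assume "((i,j),(k,l)) \<in> E2"
    then have "(k,j) = (4,3)"
      by (simp add: E2_def)
    then show "(i,l) \<notin> occupied_cells E1 E2 \<or> (k,j) \<notin> occupied_cells E1 E2"
      by (simp add: occ)
  next
    fix i j p q k l
    assume "((i,j),(p,q)) \<in> E2" and "distinct [(k,l),(k,j),(k,q),(i,l),(p,l)]"
    moreover from this have "i = 3" "j = 3" "p = 4" "q = 2"
      by (simp_all add: E2_def)
    ultimately show "\<exists>c\<in>{(k,l),(k,j),(k,q),(i,l),(p,l)}. c \<notin> occupied_cells E1 E2"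
      by (auto simp: occ)
  qed
qed

theorem theorem2p4:
  shows "z2 4 3 = 8"
  using witness_4_3 card_config_4_3_le by (rule z2_eqI)

end
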